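(* For every $m\ge3$ there exists a constant $B_m>0$ such that $$\omega_{\mathbb{CP}^{m-1}}=B_m\int_{\mathbb{CP}^{m-1}}F_p^*\omega_{\mathbb{CP}^{m-2}}\,dp.$$
   Context: $\omega_{\mathbb{CP}^k}$ is the Fubini–Study form and $dp$ the Fubini–Study volume measure on $\mathbb{CP}^{m-1}$. For $p\in\mathbb{CP}^{m-1}$, with $L_p\subset\mathbb{C}^m$ the complex line represented by $p$, $T_p$ the orthogonal projection onto $L_p^\perp$ and $\varphi_p:L_p^\perp\to\mathbb{C}^{m-1}$ coordinates in a complex orthonormal basis of $L_p^\perp$, the map $F_p:\mathbb{CP}^{m-1}\setminus\{p\}\to\mathbb{CP}^{m-2}$ is $F_p([z])=[\varphi_p(T_pz)]$. The integral is taken pointwise (at each point $x$, over $p\neq x$). *)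

theory Defs
  imports "HOL-Analysis.Analysis"
begin

text \<open>Points of CP^(m-1) are represented by nonzero vectors of complex^'m (with CARD('m) = m);
  tangent vectors at [z] are represented by their lifts in complex^'m.\<close>

definition herm :: "complex^'n \<Rightarrow> complex^'n \<Rightarrow> complex" where
  "herm a b = (\<Sum>i\<in>UNIV. a $ i * cnj (b $ i))"

text \<open>Fubini--Study form pulled back to C^n minus 0, i.e. (i/2) ddbar log |y|^2,
  evaluated at the point y on the tangent vectors a, b.\<close>
definition fs_form :: "complex^'n \<Rightarrow> complex^'n \<Rightarrow> complex^'n \<Rightarrow> real" where
  "fs_form y a b =
     - Im (herm a b / complex_of_real (Re (herm y y))
           - herm a y * herm y b / complex_of_real ((Re (herm y y))^2))"

definition proj_perp :: "complex^'n \<Rightarrow> complex^'n \<Rightarrow> complex^'n" where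
  "proj_perp q y = y - (herm y q / herm q q) *s q"

text \<open>Domain of the p-integration at the point x = [z]: representatives q of p in the unit
  ball (q \<noteq> 0), with p \<noteq> x, i.e. T_p z \<noteq> 0.  Lebesgue measure on the unit ball pushes
  forward to a positive multiple of the Fubini--Study volume on CP^(m-1).\<close>
definition avoid_dom :: "complex^'n \<Rightarrow> (complex^'n) set" where
  "avoid_dom z = {q. q \<noteq> 0 \<and> norm q \<le> 1 \<and> proj_perp q z \<noteq> 0}"

end

theory Submission
  imports Defs
begin

(* The unitary group acts transitively on pairs (point of CP^(m-1), unit tangent vector), and the
   integral is invariant under it: the integrand by naturality of T_p, the measure because Lebesgue
   measure on C^m is unitarily invariant (uniqueness of Haar measure).  Hence the averaged metric
   w |-> int F_p^* omega(w, i w) dp is a constant multiple of omega(w, i w), and by polarization the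
   same holds for the forms.  The constant is positive because the integrand is continuous,
   nonnegative and equal to 1 at some point; it is finite because near the singular set p = x the
   integrand is bounded by 1/|T_x p|^2, the inverse square distance in the 2(m-1) real directions
   transversal to x, which is integrable precisely because m >= 3. *)

lemma herm_add_left: "herm (a + b) c = herm a c + herm b c"
  by (simp add: herm_def algebra_simps sum.distrib)

lemma herm_add_right: "herm a (b + c) = herm a b + herm a c"
  by (simp add: herm_def algebra_simps sum.distrib)

lemma herm_diff_left: "herm (a - b) c = herm a c - herm b c"
  by (simp add: herm_def algebra_simps sum_subtractf)

lemma herm_diff_right: "herm a (b - c) = herm a b - herm a c"
  by (simp add: herm_def algebra_simps sum_subtractf)

lemma herm_smult_left: "herm (k *s a) c = k * herm a c"
  by (simp add: herm_def algebra_simps sum_distrib_left)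

lemma herm_smult_right: "herm a (k *s c) = cnj k * herm a c"
  by (simp add: herm_def algebra_simps sum_distrib_left)

lemmas herm_simps = herm_add_left herm_add_right herm_diff_left herm_diff_right
  herm_smult_left herm_smult_right

lemma herm_zero_left [simp]: "herm 0 c = 0"
  by (simp add: herm_def)

lemma herm_zero_right [simp]: "herm a 0 = 0"
  by (simp add: herm_def)

lemma herm_commute: "herm b a = cnj (herm a b)"
  by (simp add: herm_def mult.commute)

lemma herm_self: "herm a a = complex_of_real ((norm a)\<^sup>2)"
proof -
  have "herm a a = (\<Sum>i\<in>UNIV. complex_of_real ((cmod (a $ i))\<^sup>2))"
    unfolding herm_def by (rule sum.cong) (simp_all add: complex_norm_square[symmetric])
  also have "\<dots> = complex_of_real ((norm a)\<^sup>2)"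
    by (simp add: norm_vec_def L2_set_def sum_nonneg)
  finally show ?thesis .
qed

lemma herm_self_eq_0_iff [simp]: "herm a a = 0 \<longleftrightarrow> a = 0"
  by (simp add: herm_self)

lemma cnj_herm_self [simp]: "cnj (herm a a) = herm a a"
  by (simp add: herm_self)

lemma herm_self_normalize:
  "x \<noteq> 0 \<Longrightarrow> herm (complex_of_real (1 / norm x) *s x) (complex_of_real (1 / norm x) *s x) = 1"
  by (simp add: herm_smult_left herm_smult_right herm_self[of x] power2_eq_square)

lemma herm_axis_left: "herm (axis a c) q = c * cnj (q $ a)"
proof -
  have "herm (axis a c) q = (\<Sum>i\<in>UNIV. if i = a then c * cnj (q $ i) else 0)"
    unfolding herm_def by (rule sum.cong) (auto simp: axis_def)
  then show ?thesis
    by simp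
qed

lemma herm_axis_right: "herm q (axis a c) = q $ a * cnj c"
  using herm_axis_left[of a c q] by (simp add: herm_commute[of q])

lemma norm_axis_complex [simp]: "norm (axis a (c::complex)) = cmod c"
proof -
  have "complex_of_real ((norm (axis a c))\<^sup>2) = complex_of_real ((cmod c)\<^sup>2)"
    unfolding herm_self[symmetric] herm_axis_left by (simp add: axis_def complex_norm_square[symmetric])
  then have "(norm (axis a c))\<^sup>2 = (cmod c)\<^sup>2"
    by (simp only: of_real_eq_iff)
  then show ?thesis
    by simp
qed

lemma proj_perp_add: "proj_perp q (a + b) = proj_perp q a + proj_perp q b"
  by (simp add: proj_perp_def vec_eq_iff herm_simps algebra_simps add_divide_distrib)

lemma proj_perp_diff: "proj_perp q (a - b) = proj_perp q a - proj_perp q b"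
  by (simp add: proj_perp_def vec_eq_iff herm_simps algebra_simps diff_divide_distrib)

lemma proj_perp_smult: "proj_perp q (c *s a) = c *s proj_perp q a"
  by (simp add: proj_perp_def vec_eq_iff herm_simps algebra_simps)

lemma proj_perp_orthogonal: "q \<noteq> 0 \<Longrightarrow> herm (proj_perp q a) q = 0"
  by (simp add: proj_perp_def herm_simps)

lemma herm_proj_perp:
  "herm (proj_perp q a) (proj_perp q b) = herm a b - herm a q * herm q b / herm q q"
proof (cases "q = 0")
  case False
  then show ?thesis
    by (simp add: proj_perp_def herm_simps herm_commute[of q a] herm_commute[of b q]
        field_simps power2_eq_square)
qed (simp add: proj_perp_def)

lemma norm_proj_perp_sq:
  assumes "q \<noteq> 0"
  shows "(norm (proj_perp q a))\<^sup>2 = (norm a)\<^sup>2 - (cmod (herm a q))\<^sup>2 / (norm q)\<^sup>2"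
proof -
  have "herm a q * herm q a = complex_of_real ((cmod (herm a q))\<^sup>2)"
    by (simp add: herm_commute[of q a] complex_mult_cnj cmod_power2)
  then have "complex_of_real ((norm (proj_perp q a))\<^sup>2)
      = complex_of_real ((norm a)\<^sup>2 - (cmod (herm a q))\<^sup>2 / (norm q)\<^sup>2)"
    unfolding herm_self[symmetric] herm_proj_perp by (simp add: herm_self)
  then show ?thesis
    using of_real_eq_iff by blast
qed

lemma norm_proj_perp_le: "norm (proj_perp q a) \<le> norm a"
proof (cases "q = 0")
  case False
  then have "(norm (proj_perp q a))\<^sup>2 \<le> (norm a)\<^sup>2"
    by (simp add: norm_proj_perp_sq)
  then show ?thesis
    by simp
qed (simp add: proj_perp_def)

lemma avoid_dom_smult: "c \<noteq> 0 \<Longrightarrow> avoid_dom (c *s z) = avoid_dom z"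
  by (auto simp: avoid_dom_def proj_perp_smult vec_eq_iff)

section \<open>The Fubini--Study form\<close>

definition fs_herm :: "complex^'n \<Rightarrow> complex^'n \<Rightarrow> complex^'n \<Rightarrow> complex" where
  "fs_herm y a b = herm a b / herm y y - herm a y * herm y b / (herm y y)\<^sup>2"

lemma fs_form_eq_Im_fs_herm: "fs_form y a b = - Im (fs_herm y a b)"
  by (simp add: fs_form_def fs_herm_def herm_self)

lemma fs_herm_add_left: "fs_herm y (a + a') b = fs_herm y a b + fs_herm y a' b"
  by (simp add: fs_herm_def herm_simps add_divide_distrib diff_divide_distrib algebra_simps)

lemma fs_herm_add_right: "fs_herm y a (b + b') = fs_herm y a b + fs_herm y a b'"
  by (simp add: fs_herm_def herm_simps add_divide_distrib diff_divide_distrib algebra_simps)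

lemma fs_herm_diff_left: "fs_herm y (a - a') b = fs_herm y a b - fs_herm y a' b"
  by (simp add: fs_herm_def herm_simps add_divide_distrib diff_divide_distrib algebra_simps)

lemma fs_herm_diff_right: "fs_herm y a (b - b') = fs_herm y a b - fs_herm y a b'"
  by (simp add: fs_herm_def herm_simps add_divide_distrib diff_divide_distrib algebra_simps)

lemma fs_herm_smult_left: "fs_herm y (c *s a) b = c * fs_herm y a b"
  by (simp add: fs_herm_def herm_simps algebra_simps)

lemma fs_herm_smult_right: "fs_herm y a (c *s b) = cnj c * fs_herm y a b"
  by (simp add: fs_herm_def herm_simps algebra_simps)

lemmas fs_herm_simps = fs_herm_add_left fs_herm_add_right fs_herm_diff_left fs_herm_diff_right
  fs_herm_smult_left fs_herm_smult_right

lemma fs_herm_commute: "fs_herm y b a = cnj (fs_herm y a b)"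
  by (simp add: fs_herm_def herm_commute[of b a] herm_commute[of b y] herm_commute[of y a]
      mult.commute)

lemma fs_herm_base_left [simp]: "fs_herm y y b = 0"
  by (cases "y = 0") (simp_all add: fs_herm_def power2_eq_square)

lemma fs_herm_base_right [simp]: "fs_herm y a y = 0"
  by (cases "y = 0") (simp_all add: fs_herm_def power2_eq_square)

lemma fs_herm_self: "fs_herm y a a = herm (proj_perp y a) (proj_perp y a) / herm y y"
  by (cases "y = 0") (simp_all add: fs_herm_def herm_proj_perp field_simps power2_eq_square)

lemma fs_herm_smult_base: "fs_herm (c *s y) a b = fs_herm y a b / (c * cnj c)"
  by (cases "c = 0 \<or> y = 0") (auto simp: fs_herm_def herm_simps field_simps power2_eq_square)

lemma fs_form_add_smult_base: "fs_form y (a + \<alpha> *s y) (b + \<beta> *s y) = fs_form y a b"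
  by (simp add: fs_form_eq_Im_fs_herm fs_herm_simps)

lemma fs_form_smult_base: "fs_form (c *s y) a b = fs_form y a b / (cmod c)\<^sup>2"
  by (simp add: fs_form_eq_Im_fs_herm fs_herm_smult_base complex_mult_cnj cmod_power2
      del: of_real_add of_real_power)

lemma fs_form_smult: "fs_form y (c *s a) (c *s b) = (cmod c)\<^sup>2 * fs_form y a b"
  unfolding fs_form_eq_Im_fs_herm fs_herm_smult_left fs_herm_smult_right mult.assoc[symmetric]
  by (simp add: cmod_power2) (simp add: power2_eq_square)

lemma fs_form_i: "fs_form y a (\<i> *s a) = (norm (proj_perp y a))\<^sup>2 / (norm y)\<^sup>2"
  by (simp add: fs_form_eq_Im_fs_herm fs_herm_smult_right fs_herm_self herm_self
      del: of_real_power)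

lemma fs_form_polarization:
  "fs_form y a b =
    (fs_form y (a - \<i> *s b) (\<i> *s (a - \<i> *s b)) - fs_form y (a + \<i> *s b) (\<i> *s (a + \<i> *s b))) / 4"
proof -
  have "Im (fs_herm y c c) = 0" for c
    using fs_herm_commute[of y c c] by (metis Reals_cnj_iff complex_is_Real_iff)
  then show ?thesis
    by (simp add: fs_form_eq_Im_fs_herm fs_herm_simps fs_herm_commute[of y b a] algebra_simps)
qed

section \<open>Unitary maps\<close>

definition unitary_map :: "(complex^'n \<Rightarrow> complex^'n) \<Rightarrow> bool" where
  "unitary_map U \<longleftrightarrow> (\<forall>x y. herm (U x) (U y) = herm x y)
     \<and> (\<forall>x y. U (x + y) = U x + U y) \<and> (\<forall>c x. U (c *s x) = c *s U x)"

lemma unitary_map_herm: "unitary_map U \<Longrightarrow> herm (U x) (U y) = herm x y"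
  by (simp add: unitary_map_def)

lemma unitary_map_add: "unitary_map U \<Longrightarrow> U (x + y) = U x + U y"
  by (simp add: unitary_map_def)

lemma unitary_map_smult: "unitary_map U \<Longrightarrow> U (c *s x) = c *s U x"
  by (simp add: unitary_map_def)

lemma unitary_map_diff: "unitary_map U \<Longrightarrow> U (x - y) = U x - U y"
  using unitary_map_add[of U "x - y" y] by simp

lemma unitary_map_norm: "unitary_map U \<Longrightarrow> norm (U x) = norm x"
  using unitary_map_herm[of U x x] unfolding herm_self of_real_eq_iff
  by simp

lemma unitary_map_eq_0_iff: "unitary_map U \<Longrightarrow> U x = 0 \<longleftrightarrow> x = 0"
  by (metis norm_eq_zero unitary_map_norm)

lemma scaleR_eq_smult_of_real: "r *\<^sub>R x = complex_of_real r *s x"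
  by (simp only: vec_eq_iff vector_scaleR_component vector_smult_component)
    (simp add: scaleR_conv_of_real)

lemma unitary_map_linear: "unitary_map U \<Longrightarrow> linear U"
  by (rule linearI) (simp_all add: unitary_map_add scaleR_eq_smult_of_real unitary_map_smult)

lemma proj_perp_unitary_map: "unitary_map U \<Longrightarrow> proj_perp (U q) (U a) = U (proj_perp q a)"
  by (simp add: proj_perp_def unitary_map_diff unitary_map_smult unitary_map_herm)

lemma fs_form_unitary_map: "unitary_map U \<Longrightarrow> fs_form (U y) (U a) (U b) = fs_form y a b"
  by (simp add: fs_form_def unitary_map_herm)

lemma avoid_dom_unitary_map: "unitary_map U \<Longrightarrow> U q \<in> avoid_dom (U z) \<longleftrightarrow> q \<in> avoid_dom z"
  by (simp add: avoid_dom_def proj_perp_unitary_map unitary_map_eq_0_iff unitary_map_norm)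

definition householder :: "complex^'n \<Rightarrow> complex^'n \<Rightarrow> complex^'n" where
  "householder w x = x - (2 * herm x w) *s w"

lemma unitary_map_householder:
  fixes w :: "complex^'n"
  assumes "herm w w = 1"
  shows "unitary_map (householder w)"
  unfolding unitary_map_def
proof (intro conjI allI)
  fix x y :: "complex^'n"
  show "herm (householder w x) (householder w y) = herm x y"
    by (simp add: householder_def herm_simps assms herm_commute[of w y] algebra_simps)
  show "householder w (x + y) = householder w x + householder w y"
    by (simp add: householder_def herm_simps vec_eq_iff algebra_simps)
next
  fix c and x :: "complex^'n"
  show "householder w (c *s x) = c *s householder w x"
    by (simp add: householder_def herm_simps vec_eq_iff algebra_simps)
qed

lemma householder_eq_diff:
  fixes a d :: "complex^'n"
  assumes "d \<noteq> 0" and hdd: "herm d d = 2 * herm a d"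
  shows "householder (complex_of_real (1 / norm d) *s d) a = a - d"
proof -
  have "herm a d \<noteq> 0"
    using assms by (metis herm_self_eq_0_iff mult_zero_right)
  then have "2 * herm a d / herm d d = 1"
    using hdd by simp
  moreover have "2 * herm a (complex_of_real (1 / norm d) *s d) * complex_of_real (1 / norm d)
      = 2 * herm a d / herm d d"
    using \<open>d \<noteq> 0\<close> by (simp add: herm_smult_right herm_self[of d] power2_eq_square field_simps)
  ultimately show ?thesis
    by (simp add: householder_def vec_eq_iff mult.assoc[symmetric])
qed

lemma unitary_map_onto_phase_multiple:
  fixes a b :: "complex^'n"
  assumes a: "herm a a = 1" and b: "herm b b = 1"
  obtains U l where "unitary_map U" "cmod l = 1" "U a = l *s b"
    "\<And>c. herm c a = 0 \<Longrightarrow> herm c b = 0 \<Longrightarrow> U c = c"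
proof -
  define h where "h = herm a b"
  \<comment> \<open>the phase \<open>l\<close> makes \<open>herm a (l b)\<close> real, so the reflection in \<open>d = a - l b\<close> swaps \<open>a\<close> and \<open>l b\<close>\<close>
  define l where "l = (if h = 0 then 1 else h / complex_of_real (cmod h))"
  define d where "d = a - l *s b"
  have l1: "cmod l = 1"
    by (simp add: l_def norm_divide)
  have l_h: "cnj l * h = complex_of_real (cmod h)"
    by (cases "h = 0") (simp_all add: l_def complex_norm_square[symmetric] power2_eq_square field_simps)
  show ?thesis
  proof (cases "d = 0")
    case True
    show ?thesis
      by (rule that[of id l]) (use True l1 in \<open>simp_all add: unitary_map_def d_def\<close>)
  next
    case False
    have "l * cnj l = 1"
      using l1 by (simp add: complex_norm_square[symmetric])
    moreover have "l * cnj h = complex_of_real (cmod h)"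
      using arg_cong[OF l_h, of cnj] by (simp add: mult.commute)
    ultimately have "herm d d = 2 * herm a d"
      using l_h by (simp add: d_def herm_simps a b herm_commute[of b a] h_def[symmetric] algebra_simps)
    then have "householder w a = l *s b" if "w = complex_of_real (1 / norm d) *s d" for w
      using householder_eq_diff[OF False] that by (simp add: d_def)
    moreover have "householder (complex_of_real (1 / norm d) *s d) c = c"
      if "herm c a = 0" "herm c b = 0" for c
      using that by (simp add: householder_def d_def herm_simps)
    ultimately show ?thesis
      using that[OF unitary_map_householder[OF herm_self_normalize[OF False]] l1] by blast
  qed
qed

section \<open>Lebesgue measure\<close>

lemma nn_integral_indicator_translate_lborel:
  fixes c :: "'a::euclidean_space"
  assumes "C \<in> sets borel"
  shows "(\<integral>\<^sup>+y. indicator C (c + y) \<partial>lborel) = emeasure lborel C"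
  using nn_integral_distr[of "(+) c" lborel borel "indicator C"] assms by (simp add: lborel_distr_plus)

lemma emeasure_mult_lborel_translation_invariant:
  fixes M :: "'a::euclidean_space measure"
  assumes sets_M: "sets M = sets borel" and "sigma_finite_measure M"
    and translation: "\<And>c. distr M borel ((+) c) = M"
    and A [measurable]: "A \<in> sets borel" and A_symmetric: "\<And>x. x \<in> A \<Longrightarrow> -x \<in> A"
    and B [measurable]: "B \<in> sets borel"
  shows "emeasure M A * emeasure lborel B = emeasure lborel A * emeasure M B"
proof -
  interpret M: sigma_finite_measure M by fact
  interpret P: pair_sigma_finite M lborel ..
  have [measurable_cong]: "sets M = sets borel"
    by (rule sets_M)
  have M_translate: "(\<integral>\<^sup>+t. f (t - y) t \<partial>M) = (\<integral>\<^sup>+x. f x (x + y) \<partial>M)"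
    if [measurable]: "case_prod f \<in> borel_measurable (borel \<Otimes>\<^sub>M borel)" for f y
    by (subst translation[of y, symmetric]) (simp add: nn_integral_distr add.commute)
  have "emeasure M A * emeasure lborel B
      = (\<integral>\<^sup>+x. (\<integral>\<^sup>+y. indicator A x * indicator B (x + y) \<partial>lborel) \<partial>M)"
    using sets_M by (simp add: nn_integral_cmult nn_integral_indicator_translate_lborel nn_integral_multc)
  also have "\<dots> = (\<integral>\<^sup>+y. (\<integral>\<^sup>+x. indicator A x * indicator B (x + y) \<partial>M) \<partial>lborel)"
    by (rule P.Fubini'[symmetric]) measurable
  also have "\<dots> = (\<integral>\<^sup>+y. (\<integral>\<^sup>+t. indicator A (t - y) * indicator B t \<partial>M) \<partial>lborel)"
    by (simp add: M_translate[where f = "\<lambda>x t. indicator A x * indicator B t"])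
  also have "\<dots> = (\<integral>\<^sup>+t. (\<integral>\<^sup>+y. indicator A (t - y) * indicator B t \<partial>lborel) \<partial>M)"
    by (rule P.Fubini') measurable
  also have "\<dots> = (\<integral>\<^sup>+t. indicator B t * emeasure lborel A \<partial>M)"
  proof (rule nn_integral_cong)
    fix t
    have "indicator A (t - y) = (indicator A (-t + y) :: ennreal)" for y
      using A_symmetric[of "t - y"] A_symmetric[of "-t + y"] by (auto simp: indicator_def)
    moreover have "(\<lambda>y. indicator A (y - t) :: ennreal) \<in> borel_measurable lborel"
      by measurable
    ultimately have "(\<integral>\<^sup>+y. indicator A (t - y) * indicator B t \<partial>lborel)
        = (\<integral>\<^sup>+y. indicator A (y - t) \<partial>lborel) * indicator B t"
      by (simp add: nn_integral_multc)
    then show "(\<integral>\<^sup>+y. indicator A (t - y) * indicator B t \<partial>lborel) = indicator B t * emeasure lborel A"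
      using nn_integral_indicator_translate_lborel[OF A, of "-t"] by (simp add: mult.commute)
  qed
  also have "\<dots> = emeasure lborel A * emeasure M B"
    using sets_M by (simp add: nn_integral_multc mult.commute)
  finally show ?thesis .
qed

lemma lborel_eqI_translation_invariant:
  fixes M :: "'a::euclidean_space measure"
  assumes sets_M: "sets M = sets borel" and "sigma_finite_measure M"
    and "\<And>c. distr M borel ((+) c) = M"
    and ball: "emeasure M (ball 0 1) = emeasure lborel (ball (0::'a) 1)"
  shows "M = lborel"
proof (rule measure_eqI)
  show "sets M = sets lborel"
    using sets_M by simp
  fix B assume "B \<in> sets M"
  then have "emeasure lborel (ball (0::'a) 1) * emeasure lborel B = emeasure lborel (ball (0::'a) 1) * emeasure M B"
    using emeasure_mult_lborel_translation_invariant[OF assms(1-3), of "ball 0 1" B] ball sets_M by simp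
  moreover have "emeasure lborel (ball (0::'a) 1) \<noteq> 0" "emeasure lborel (ball (0::'a) 1) \<noteq> \<infinity>"
    using content_ball_pos[of 1 "0::'a"] emeasure_lborel_ball_finite[of "0::'a" 1]
    by (auto simp: measure_def)
  ultimately show "emeasure M B = emeasure lborel B"
    by (simp add: ennreal_mult_cancel_left)
qed

lemma distr_lborel_linear_isometry:
  fixes f :: "'a::euclidean_space \<Rightarrow> 'a"
  assumes lin: "linear f" and norm_f: "\<And>x. norm (f x) = norm x"
  shows "distr lborel borel f = lborel"
proof (rule lborel_eqI_translation_invariant)
  have [measurable]: "f \<in> borel_measurable borel"
    using lin by (intro borel_measurable_continuous_onI linear_continuous_on linear_conv_bounded_linear[THEN iffD1])
  have preimage_ball: "f -` ball 0 r = ball 0 r" for r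
    by (auto simp: norm_f)
  have ball_finite: "emeasure lborel (ball (0::'a) r) \<noteq> \<infinity>" for r
    using emeasure_lborel_ball_finite[of 0 r] by (simp add: less_top)
  show "sigma_finite_measure (distr lborel borel f)"
  proof
    show "\<exists>A. countable A \<and> A \<subseteq> sets (distr lborel borel f) \<and> \<Union> A = space (distr lborel borel f)
        \<and> (\<forall>a\<in>A. emeasure (distr lborel borel f) a \<noteq> \<infinity>)"
    proof (intro exI[of _ "range (\<lambda>n::nat. ball (0::'a) (real n))"] conjI)
      show "\<Union> (range (\<lambda>n::nat. ball (0::'a) (real n))) = space (distr lborel borel f)"
        by (auto simp: reals_Archimedean2)
      show "\<forall>a\<in>range (\<lambda>n::nat. ball (0::'a) (real n)). emeasure (distr lborel borel f) a \<noteq> \<infinity>"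
        using ball_finite by (auto simp: emeasure_distr preimage_ball)
    qed auto
  qed
  show "distr (distr lborel borel f) borel ((+) c) = distr lborel borel f" for c
  proof -
    have "inj f"
      unfolding linear_injective_0[OF lin] using norm_f by (metis norm_eq_zero)
    then obtain c' where c': "c = f c'"
      using linear_inj_imp_surj[OF lin] by (metis surj_def)
    have "(+) c \<circ> f = f \<circ> (+) c'"
      by (auto simp: c' linear_add[OF lin])
    then have "distr (distr lborel borel f) borel ((+) c) = distr (distr lborel borel ((+) c')) borel f"
      by (subst (1 2) distr_distr) auto
    then show ?thesis
      by (simp add: lborel_distr_plus)
  qed
  show "emeasure (distr lborel borel f) (ball 0 1) = emeasure lborel (ball (0::'a) 1)"
    by (simp add: emeasure_distr preimage_ball)
qed simp

lemma distr_lborel_unitary_map: "unitary_map U \<Longrightarrow> distr lborel borel U = lborel"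
  by (simp add: distr_lborel_linear_isometry unitary_map_linear unitary_map_norm)

lemma ex_power_le_less:
  fixes x b :: real
  assumes "1 \<le> x" "1 < b"
  shows "\<exists>n. b ^ n \<le> x \<and> x < b ^ Suc n"
proof -
  define n where "n = nat \<lfloor>log b x\<rfloor>"
  have "0 \<le> log b x"
    using assms by simp
  then have "real_of_int \<lfloor>log b x\<rfloor> = real n"
    by (simp add: n_def)
  then have "b powr real n \<le> x \<and> x < b powr (real n + 1)"
    using floor_log_eq_powr_iff[of x b "\<lfloor>log b x\<rfloor>"] assms by simp
  moreover have "b powr (real n + 1) = b ^ Suc n" "b powr real n = b ^ n"
    using assms by (simp_all add: powr_add powr_realpow)
  ultimately show ?thesis
    by auto
qed

lemma nn_integral_le_suminf_level_sets:
  fixes g :: "'a \<Rightarrow> real" and b :: real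
  assumes [measurable]: "S \<in> sets M" "g \<in> borel_measurable M"
    and "1 < b" and g_ge_1: "\<And>x. x \<in> S \<Longrightarrow> 1 \<le> g x"
  shows "(\<integral>\<^sup>+x. indicator S x * ennreal (g x) \<partial>M)
    \<le> (\<Sum>n. ennreal (b ^ Suc n) * emeasure M {x \<in> S. b ^ n \<le> g x})"
proof -
  define F where "F n x = ennreal (b ^ Suc n) * indicator {x \<in> S. b ^ n \<le> g x} x" for n x
  have "indicator S x * ennreal (g x) \<le> (\<Sum>n. F n x)" for x
  proof (cases "x \<in> S")
    case True
    then obtain n where n: "b ^ n \<le> g x" "g x < b ^ Suc n"
      using ex_power_le_less[OF g_ge_1 \<open>1 < b\<close>] by blast
    then have "indicator S x * ennreal (g x) \<le> F n x"
      using True by (simp add: F_def ennreal_leI)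
    also have "\<dots> = (\<Sum>i\<in>{n}. F i x)"
      by simp
    also have "\<dots> \<le> (\<Sum>n. F n x)"
      by (rule sum_le_suminf[OF summableI]) auto
    finally show ?thesis .
  qed simp
  then have "(\<integral>\<^sup>+x. indicator S x * ennreal (g x) \<partial>M) \<le> (\<integral>\<^sup>+x. (\<Sum>n. F n x) \<partial>M)"
    by (rule nn_integral_mono)
  also have "\<dots> = (\<Sum>n. \<integral>\<^sup>+x. F n x \<partial>M)"
    by (rule nn_integral_suminf) (simp add: F_def)
  finally show ?thesis
    by (simp add: F_def nn_integral_cmult_indicator)
qed

lemma nn_integral_finite_of_level_sets:
  fixes g :: "'a \<Rightarrow> real" and b c C :: real
  assumes [measurable]: "S \<in> sets M" "g \<in> borel_measurable M"
    and "1 < b" "\<And>x. x \<in> S \<Longrightarrow> 1 \<le> g x"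
    and level: "\<And>n. emeasure M {x \<in> S. b ^ n \<le> g x} \<le> ennreal (C * c ^ n)"
    and "0 \<le> C" "0 \<le> c" "b * c < 1"
  shows "(\<integral>\<^sup>+x. indicator S x * ennreal (g x) \<partial>M) < \<infinity>"
proof -
  have "(\<integral>\<^sup>+x. indicator S x * ennreal (g x) \<partial>M)
      \<le> (\<Sum>n. ennreal (b ^ Suc n) * emeasure M {x \<in> S. b ^ n \<le> g x})"
    by (rule nn_integral_le_suminf_level_sets) fact+
  also have "\<dots> \<le> (\<Sum>n. ennreal (b * C * (b * c) ^ n))"
  proof (rule suminf_le)
    fix n
    have "ennreal (b ^ Suc n) * emeasure M {x \<in> S. b ^ n \<le> g x} \<le> ennreal (b ^ Suc n) * ennreal (C * c ^ n)"
      by (rule mult_left_mono[OF level]) simp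
    also have "\<dots> = ennreal (b * C * (b * c) ^ n)"
      using \<open>1 < b\<close> \<open>0 \<le> C\<close> \<open>0 \<le> c\<close> by (simp add: ennreal_mult[symmetric] power_mult_distrib ac_simps)
    finally show "ennreal (b ^ Suc n) * emeasure M {x \<in> S. b ^ n \<le> g x} \<le> ennreal (b * C * (b * c) ^ n)" .
  qed auto
  also have "\<dots> = ennreal (\<Sum>n. b * C * (b * c) ^ n)"
    using \<open>1 < b\<close> \<open>0 \<le> C\<close> \<open>0 \<le> c\<close> \<open>b * c < 1\<close>
    by (intro suminf_ennreal2) (auto intro!: summable_mult summable_geometric)
  finally show ?thesis
    by (simp add: le_less_trans)
qed

lemma set_integral_pos_of_ball:
  fixes f :: "'a::euclidean_space \<Rightarrow> real"
  assumes integrable: "set_integrable lborel D f" and nonneg: "\<And>x. x \<in> D \<Longrightarrow> 0 \<le> f x"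
    and "0 < r" "0 < \<epsilon>" and ball: "\<And>x. x \<in> ball c r \<Longrightarrow> x \<in> D \<and> \<epsilon> \<le> f x"
  shows "0 < (LINT x : D | lborel. f x)"
proof -
  have "indicator (ball c r) x * \<epsilon> \<le> indicator D x *\<^sub>R f x" for x
    using ball[of x] nonneg[of x] \<open>0 < \<epsilon>\<close> by (auto simp: indicator_def)
  then have "(\<integral>x. indicator (ball c r) x * \<epsilon> \<partial>lborel) \<le> (\<integral>x. indicator D x *\<^sub>R f x \<partial>lborel)"
    using integrable emeasure_lborel_ball_finite[of c r] unfolding set_integrable_def
    by (intro integral_mono integrable_mult_left integrable_real_indicator) simp_all
  moreover have "0 < (\<integral>x. indicator (ball c r) x * \<epsilon> \<partial>lborel)"
    using content_ball_pos[OF \<open>0 < r\<close>, of c] \<open>0 < \<epsilon>\<close> by simp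
  ultimately show ?thesis
    by (simp add: set_lebesgue_integral_def)
qed

section \<open>The averaged form\<close>

text \<open>\<open>fs_pullback z u v q\<close> is \<open>(F\<^sub>p\<^sup>* \<omega>)\<^sub>[\<^sub>z\<^sub>](u, v)\<close> for \<open>p = [q]\<close>: the unitary
  coordinates \<open>\<phi>\<^sub>p\<close> do not change the Fubini--Study form.\<close>
definition fs_pullback :: "complex^'n \<Rightarrow> complex^'n \<Rightarrow> complex^'n \<Rightarrow> complex^'n \<Rightarrow> real" where
  "fs_pullback z u v q = fs_form (proj_perp q z) (proj_perp q u) (proj_perp q v)"

definition averaged_fs_form :: "complex^'n \<Rightarrow> complex^'n \<Rightarrow> complex^'n \<Rightarrow> real" where
  "averaged_fs_form z u v = (LINT q : avoid_dom z | lborel. fs_pullback z u v q)"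

lemma continuous_herm [continuous_intros]:
  "continuous F f \<Longrightarrow> continuous F g \<Longrightarrow> continuous F (\<lambda>x. herm (f x) (g x))"
  unfolding herm_def by (intro continuous_intros)

lemma continuous_on_herm [continuous_intros]:
  "continuous_on S f \<Longrightarrow> continuous_on S g \<Longrightarrow> continuous_on S (\<lambda>x. herm (f x) (g x))"
  unfolding herm_def by (intro continuous_intros)

lemma borel_measurable_herm [measurable]:
  "(\<lambda>q::complex^'n. herm q a) \<in> borel_measurable borel"
  "(\<lambda>q::complex^'n. herm a q) \<in> borel_measurable borel"
  "(\<lambda>q::complex^'n. herm q q) \<in> borel_measurable borel"
  by (intro borel_measurable_continuous_onI continuous_intros)+

lemma borel_measurable_herm_proj_perp [measurable]:
  "(\<lambda>q. herm (proj_perp q a) (proj_perp q b)) \<in> borel_measurable borel"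
  unfolding herm_proj_perp by measurable

lemma borel_measurable_fs_pullback [measurable]: "fs_pullback z u v \<in> borel_measurable borel"
  unfolding fs_pullback_def[abs_def] fs_form_def by measurable

lemma sets_avoid_dom [measurable]: "avoid_dom z \<in> sets borel"
proof -
  have "avoid_dom z = {q. q \<noteq> 0 \<and> norm q \<le> 1 \<and> herm (proj_perp q z) (proj_perp q z) \<noteq> 0}"
    by (simp add: avoid_dom_def)
  also have "\<dots> \<in> sets borel"
    by measurable
  finally show ?thesis .
qed

lemma continuous_at_fs_pullback:
  assumes "q \<noteq> 0" "proj_perp q z \<noteq> 0"
  shows "continuous (at q) (fs_pullback z u v)"
proof -
  have herm_proj: "continuous (at q) (\<lambda>q. herm (proj_perp q a) (proj_perp q b))" for a b
    unfolding herm_proj_perp using assms(1) by (intro continuous_intros) simp_all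
  have "Re (herm (proj_perp q z) (proj_perp q z)) \<noteq> 0"
    using assms(2) by (simp add: herm_self)
  then show ?thesis
    unfolding fs_pullback_def[abs_def] fs_form_def
    by (intro continuous_intros continuous_Re continuous_Im herm_proj) simp_all
qed

lemma fs_pullback_unitary_map:
  "unitary_map U \<Longrightarrow> fs_pullback (U z) (U u) (U v) (U q) = fs_pullback z u v q"
  by (simp add: fs_pullback_def proj_perp_unitary_map fs_form_unitary_map)

lemma
  assumes "unitary_map U"
  shows set_integrable_fs_pullback_unitary_map:
      "set_integrable lborel (avoid_dom (U z)) (fs_pullback (U z) (U u) (U v))
        \<longleftrightarrow> set_integrable lborel (avoid_dom z) (fs_pullback z u v)"
    and averaged_fs_form_unitary_map:
      "averaged_fs_form (U z) (U u) (U v) = averaged_fs_form z u v"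
proof -
  have [measurable]: "U \<in> borel_measurable borel"
    using assms by (intro borel_measurable_continuous_onI linear_continuous_on
        linear_conv_bounded_linear[THEN iffD1] unitary_map_linear)
  define g where "g = (\<lambda>q. indicator (avoid_dom (U z)) q *\<^sub>R fs_pullback (U z) (U u) (U v) q)"
  have [measurable]: "g \<in> borel_measurable borel"
    unfolding g_def by measurable
  have g_U: "g (U q) = indicator (avoid_dom z) q *\<^sub>R fs_pullback z u v q" for q
    using avoid_dom_unitary_map[OF assms, of q z] fs_pullback_unitary_map[OF assms, of z u v q]
    by (simp add: g_def indicator_def)
  have lborel_U: "distr lborel borel U = lborel"
    using assms by (rule distr_lborel_unitary_map)
  have "integrable lborel g \<longleftrightarrow> integrable lborel (\<lambda>q. indicator (avoid_dom z) q *\<^sub>R fs_pullback z u v q)"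
    unfolding g_U[symmetric] by (subst (1) lborel_U[symmetric]) (rule integrable_distr_eq; simp)
  then show "set_integrable lborel (avoid_dom (U z)) (fs_pullback (U z) (U u) (U v))
        \<longleftrightarrow> set_integrable lborel (avoid_dom z) (fs_pullback z u v)"
    unfolding set_integrable_def g_def .
  have "integral\<^sup>L lborel g = (\<integral>q. indicator (avoid_dom z) q *\<^sub>R fs_pullback z u v q \<partial>lborel)"
    unfolding g_U[symmetric] by (subst (1) lborel_U[symmetric]) (rule integral_distr; simp)
  then show "averaged_fs_form (U z) (U u) (U v) = averaged_fs_form z u v"
    unfolding averaged_fs_form_def set_lebesgue_integral_def g_def .
qed

lemma fs_pullback_add_smult_base: "fs_pullback z (u + \<alpha> *s z) (v + \<beta> *s z) q = fs_pullback z u v q"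
  by (simp add: fs_pullback_def proj_perp_add proj_perp_smult fs_form_add_smult_base)

lemma fs_pullback_smult_base: "fs_pullback (c *s z) u v q = fs_pullback z u v q / (cmod c)\<^sup>2"
  by (simp add: fs_pullback_def proj_perp_smult fs_form_smult_base)

lemma fs_pullback_smult: "fs_pullback z (c *s u) (c *s v) q = (cmod c)\<^sup>2 * fs_pullback z u v q"
  by (simp add: fs_pullback_def proj_perp_smult fs_form_smult)

lemma fs_pullback_polarization:
  "fs_pullback z u v q =
    (fs_pullback z (u - \<i> *s v) (\<i> *s (u - \<i> *s v)) q - fs_pullback z (u + \<i> *s v) (\<i> *s (u + \<i> *s v)) q) / 4"
  unfolding fs_pullback_def proj_perp_add proj_perp_diff proj_perp_smult by (rule fs_form_polarization)

lemma fs_pullback_i: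
  "fs_pullback z w (\<i> *s w) q
    = (norm (proj_perp (proj_perp q z) (proj_perp q w)))\<^sup>2 / (norm (proj_perp q z))\<^sup>2"
  by (simp add: fs_pullback_def proj_perp_smult fs_form_i)

lemma fs_pullback_i_nonneg: "0 \<le> fs_pullback z w (\<i> *s w) q"
  by (simp add: fs_pullback_i)

lemma fs_pullback_i_le: "fs_pullback z w (\<i> *s w) q \<le> (norm w)\<^sup>2 / (norm (proj_perp q z))\<^sup>2"
proof -
  have "norm (proj_perp (proj_perp q z) (proj_perp q w)) \<le> norm w"
    using norm_proj_perp_le order_trans by blast
  then show ?thesis
    unfolding fs_pullback_i by (simp add: divide_right_mono power_mono)
qed

definition orthonormal_pair :: "complex^'n \<Rightarrow> complex^'n \<Rightarrow> bool" where
  "orthonormal_pair e f \<longleftrightarrow> herm e e = 1 \<and> herm f f = 1 \<and> herm f e = 0"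

lemma fs_pullback_phase:
  "cmod l = 1 \<Longrightarrow> cmod m = 1 \<Longrightarrow> fs_pullback (l *s z) (m *s u) (m *s v) q = fs_pullback z u v q"
  by (simp add: fs_pullback_smult_base fs_pullback_smult)

lemma
  assumes U: "unitary_map U" and phases: "cmod l = 1" "cmod m = 1"
    and Ue: "U e = l *s e'" and Uf: "U f = m *s f'"
  shows set_integrable_fs_pullback_i_transfer:
      "set_integrable lborel (avoid_dom e) (fs_pullback e f (\<i> *s f))
        \<longleftrightarrow> set_integrable lborel (avoid_dom e') (fs_pullback e' f' (\<i> *s f'))"
    and averaged_fs_form_i_transfer:
      "averaged_fs_form e f (\<i> *s f) = averaged_fs_form e' f' (\<i> *s f')"
proof -
  have U_i: "U (\<i> *s f) = m *s (\<i> *s f')"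
    using U Uf by (simp add: unitary_map_smult vec_eq_iff ac_simps)
  have "l \<noteq> 0"
    using phases by auto
  then have "avoid_dom (U e) = avoid_dom e'"
    using assms by (simp add: avoid_dom_smult)
  moreover have "fs_pullback (U e) (U f) (U (\<i> *s f)) = fs_pullback e' f' (\<i> *s f')"
    unfolding Ue Uf U_i by (rule ext) (simp only: fs_pullback_phase[OF phases])
  ultimately show
      "set_integrable lborel (avoid_dom e) (fs_pullback e f (\<i> *s f))
        \<longleftrightarrow> set_integrable lborel (avoid_dom e') (fs_pullback e' f' (\<i> *s f'))"
      "averaged_fs_form e f (\<i> *s f) = averaged_fs_form e' f' (\<i> *s f')"
    using set_integrable_fs_pullback_unitary_map[OF U, of e f "\<i> *s f"]
      averaged_fs_form_unitary_map[OF U, of e f "\<i> *s f"]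
    by (simp_all add: averaged_fs_form_def)
qed

lemma
  fixes e f e' f' :: "complex^'n"
  assumes "orthonormal_pair e f" "orthonormal_pair e' f'"
  shows set_integrable_fs_pullback_i_orthonormal_pair:
      "set_integrable lborel (avoid_dom e') (fs_pullback e' f' (\<i> *s f'))
        \<Longrightarrow> set_integrable lborel (avoid_dom e) (fs_pullback e f (\<i> *s f))"
    and averaged_fs_form_i_orthonormal_pair:
      "averaged_fs_form e f (\<i> *s f) = averaged_fs_form e' f' (\<i> *s f')"
proof -
  from assms have unit: "herm e e = 1" "herm e' e' = 1" "herm f f = 1" "herm f' f' = 1"
    and orth: "herm f e = 0" "herm f' e' = 0"
    by (auto simp: orthonormal_pair_def)
  obtain U1 l where U1: "unitary_map U1" "cmod l = 1" "U1 e = l *s e'"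
    using unitary_map_onto_phase_multiple[OF unit(1,2)] by blast
  define g where "g = U1 f"
  have g_unit: "herm g g = 1"
    using unit by (simp add: g_def unitary_map_herm[OF U1(1)])
  have "herm g (l *s e') = 0"
    using orth by (simp add: g_def flip: U1(3) add: unitary_map_herm[OF U1(1)])
  then have "herm e' g = 0"
    using U1(2) by (auto simp: herm_smult_right herm_commute[of e' g])
  have "herm e' f' = 0"
    using orth by (simp add: herm_commute[of e' f'])
  obtain U2 m where U2: "unitary_map U2" "cmod m = 1" "U2 g = m *s f'"
    and U2_fix: "\<And>c. herm c g = 0 \<Longrightarrow> herm c f' = 0 \<Longrightarrow> U2 c = c"
    using unitary_map_onto_phase_multiple[OF g_unit unit(4)] by blast
  have U2_e': "U2 e' = 1 *s e'"
    using U2_fix[OF \<open>herm e' g = 0\<close> \<open>herm e' f' = 0\<close>] by simp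
  have U1_f: "U1 f = 1 *s g"
    by (simp add: g_def)
  note first_move = set_integrable_fs_pullback_i_transfer[OF U1(1,2) _ U1(3) U1_f]
    averaged_fs_form_i_transfer[OF U1(1,2) _ U1(3) U1_f]
  note second_move = set_integrable_fs_pullback_i_transfer[OF U2(1) _ U2(2) U2_e' U2(3)]
    averaged_fs_form_i_transfer[OF U2(1) _ U2(2) U2_e' U2(3)]
  show "set_integrable lborel (avoid_dom e') (fs_pullback e' f' (\<i> *s f'))
        \<Longrightarrow> set_integrable lborel (avoid_dom e) (fs_pullback e f (\<i> *s f))"
       "averaged_fs_form e f (\<i> *s f) = averaged_fs_form e' f' (\<i> *s f')"
    using first_move second_move by simp_all
qed

lemma fs_pullback_i_normalize:
  fixes z w :: "complex^'n"
  assumes "z \<noteq> 0"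
  defines "e \<equiv> complex_of_real (1 / norm z) *s z"
    and "f \<equiv> complex_of_real (1 / norm (proj_perp z w)) *s proj_perp z w"
  shows "fs_pullback z w (\<i> *s w) q = fs_form z w (\<i> *s w) * fs_pullback e f (\<i> *s f) q"
proof -
  define w' where "w' = proj_perp z w"
  have z_eq: "z = complex_of_real (norm z) *s e"
    using \<open>z \<noteq> 0\<close> by (simp add: e_def vec_eq_iff)
  have w'_eq: "w' = complex_of_real (norm w') *s f" "\<i> *s w' = complex_of_real (norm w') *s (\<i> *s f)"
    by (cases "w' = 0"; simp add: f_def w'_def vec_eq_iff)+
  have "fs_pullback z w (\<i> *s w) q = fs_pullback z w' (\<i> *s w') q"
    using fs_pullback_add_smult_base[of z w' "herm w z / herm z z" "\<i> *s w'" "\<i> * (herm w z / herm z z)" q]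
    by (simp add: w'_def proj_perp_def vec_eq_iff algebra_simps)
  also have "\<dots> = fs_pullback (complex_of_real (norm z) *s e)
      (complex_of_real (norm w') *s f) (complex_of_real (norm w') *s (\<i> *s f)) q"
    by (simp only: flip: z_eq w'_eq)
  also have "\<dots> = fs_form z w (\<i> *s w) * fs_pullback e f (\<i> *s f) q"
    by (simp only: fs_pullback_smult_base fs_pullback_smult) (simp add: w'_def fs_form_i)
  finally show ?thesis .
qed

lemma orthonormal_pair_normalize:
  fixes z w :: "complex^'n"
  assumes "z \<noteq> 0" "proj_perp z w \<noteq> 0"
  shows "orthonormal_pair (complex_of_real (1 / norm z) *s z)
    (complex_of_real (1 / norm (proj_perp z w)) *s proj_perp z w)"
  using herm_self_normalize[OF assms(1)] herm_self_normalize[OF assms(2)] proj_perp_orthogonal[OF assms(1)]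
  unfolding orthonormal_pair_def by (simp add: herm_smult_left herm_smult_right)

lemma
  fixes z w e f :: "complex^'n"
  assumes "z \<noteq> 0" and ef: "orthonormal_pair e f"
    and integrable_ef: "set_integrable lborel (avoid_dom e) (fs_pullback e f (\<i> *s f))"
  shows set_integrable_fs_pullback_i:
      "set_integrable lborel (avoid_dom z) (fs_pullback z w (\<i> *s w))"
    and averaged_fs_form_i:
      "averaged_fs_form z w (\<i> *s w) = averaged_fs_form e f (\<i> *s f) * fs_form z w (\<i> *s w)"
proof -
  define e0 where "e0 = complex_of_real (1 / norm z) *s z"
  define f0 where "f0 = complex_of_real (1 / norm (proj_perp z w)) *s proj_perp z w"
  define c where "c = fs_form z w (\<i> *s w)"
  have integrand: "fs_pullback z w (\<i> *s w) = (\<lambda>q. c * fs_pullback e0 f0 (\<i> *s f0) q)"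
    using fs_pullback_i_normalize[OF \<open>z \<noteq> 0\<close>] by (simp add: fun_eq_iff c_def e0_def f0_def)
  have avoid_dom_z: "avoid_dom z = avoid_dom e0"
    using \<open>z \<noteq> 0\<close> by (simp add: e0_def avoid_dom_smult)
  have e0_f0: "set_integrable lborel (avoid_dom e0) (fs_pullback e0 f0 (\<i> *s f0))
      \<and> averaged_fs_form e0 f0 (\<i> *s f0) = averaged_fs_form e f (\<i> *s f)" if "c \<noteq> 0"
  proof -
    have "proj_perp z w \<noteq> 0"
      using that by (auto simp: c_def fs_form_i)
    then have "orthonormal_pair e0 f0"
      unfolding e0_def f0_def by (rule orthonormal_pair_normalize[OF \<open>z \<noteq> 0\<close>])
    then show ?thesis
      using set_integrable_fs_pullback_i_orthonormal_pair[OF _ ef]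
        averaged_fs_form_i_orthonormal_pair[OF _ ef] integrable_ef by blast
  qed
  show "set_integrable lborel (avoid_dom z) (fs_pullback z w (\<i> *s w))"
    using e0_f0 by (simp add: integrand avoid_dom_z)
  show "averaged_fs_form z w (\<i> *s w) = averaged_fs_form e f (\<i> *s f) * fs_form z w (\<i> *s w)"
    using e0_f0 by (cases "c = 0") (simp_all add: averaged_fs_form_def integrand avoid_dom_z
        flip: c_def)
qed

lemma
  fixes z u v e f :: "complex^'n"
  assumes "z \<noteq> 0" "orthonormal_pair e f"
    and "set_integrable lborel (avoid_dom e) (fs_pullback e f (\<i> *s f))"
  shows set_integrable_fs_pullback:
      "set_integrable lborel (avoid_dom z) (fs_pullback z u v)"
    and averaged_fs_form_eq:
      "averaged_fs_form z u v = averaged_fs_form e f (\<i> *s f) * fs_form z u v"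
proof -
  define a where "a = u - \<i> *s v"
  define b where "b = u + \<i> *s v"
  have polar: "fs_pullback z u v = (\<lambda>q. (fs_pullback z a (\<i> *s a) q - fs_pullback z b (\<i> *s b) q) / 4)"
    unfolding a_def b_def by (rule ext) (rule fs_pullback_polarization)
  note integrable = set_integrable_fs_pullback_i[OF assms, of a] set_integrable_fs_pullback_i[OF assms, of b]
  show "set_integrable lborel (avoid_dom z) (fs_pullback z u v)"
    unfolding polar using integrable by auto
  have "averaged_fs_form z u v = (averaged_fs_form z a (\<i> *s a) - averaged_fs_form z b (\<i> *s b)) / 4"
    unfolding averaged_fs_form_def polar using integrable by simp
  also have "\<dots> = averaged_fs_form e f (\<i> *s f) * fs_form z u v"
    unfolding averaged_fs_form_i[OF assms] fs_form_polarization[of z u v, folded a_def b_def]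
    by (simp add: right_diff_distrib)
  finally show "averaged_fs_form z u v = averaged_fs_form e f (\<i> *s f) * fs_form z u v" .
qed

lemma orthonormal_pair_axis: "j \<noteq> a \<Longrightarrow> orthonormal_pair (axis a 1) (axis j (1::complex))"
  unfolding orthonormal_pair_def herm_axis_left by (simp add: axis_def)

lemma borel_measurable_cmod_component [measurable]:
  "(\<lambda>q::complex^'n. cmod (q $ i)) \<in> borel_measurable borel"
  by (intro borel_measurable_continuous_onI continuous_intros)

lemma abs_inner_Basis_le_small_coordinates:
  fixes q b :: "complex^'n"
  assumes "norm q \<le> 1" "cmod (q $ j) \<le> r" "cmod (q $ k) \<le> r" "b \<in> Basis"
  shows "\<bar>q \<bullet> b\<bar> \<le> (if b \<in> {axis j 1, axis j \<i>, axis k 1, axis k \<i>} then r else 1)"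
proof (cases "b \<in> {axis j 1, axis j \<i>, axis k 1, axis k \<i>}")
  case True
  then show ?thesis
    using assms abs_Re_le_cmod[of "q $ j"] abs_Im_le_cmod[of "q $ j"]
      abs_Re_le_cmod[of "q $ k"] abs_Im_le_cmod[of "q $ k"]
    by (auto simp: inner_axis)
next
  case False
  have "\<bar>q \<bullet> b\<bar> \<le> norm q * norm b"
    by (rule Cauchy_Schwarz_ineq2)
  then show ?thesis
    using False assms by simp
qed

lemma emeasure_small_coordinates_le:
  fixes j k :: "'n::finite" and r :: real
  assumes "j \<noteq> k" "0 \<le> r"
  shows "emeasure lborel {q::complex^'n. norm q \<le> 1 \<and> cmod (q $ j) \<le> r \<and> cmod (q $ k) \<le> r}
    \<le> ennreal (16 * 2 ^ DIM(complex^'n) * r ^ 4)"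
proof -
  define F :: "(complex^'n) set" where "F = {axis j 1, axis j \<i>, axis k 1, axis k \<i>}"
  define g where "g b = (if b \<in> F then r else 1)" for b :: "complex^'n"
  define u where "u = (\<Sum>b\<in>Basis. g b *\<^sub>R b)"
  define l where "l = (\<Sum>b\<in>Basis. (- g b) *\<^sub>R b)"
  have u_inner: "u \<bullet> b = g b" and l_inner: "l \<bullet> b = - g b" if "b \<in> Basis" for b
    using that by (simp_all add: u_def l_def del: scaleR_minus_left)
  have "{q::complex^'n. norm q \<le> 1 \<and> cmod (q $ j) \<le> r \<and> cmod (q $ k) \<le> r} \<subseteq> cbox l u"
    using abs_inner_Basis_le_small_coordinates[of _ j r k]
    by (force simp: mem_box u_inner l_inner abs_le_iff g_def F_def)
  then have "emeasure lborel {q::complex^'n. norm q \<le> 1 \<and> cmod (q $ j) \<le> r \<and> cmod (q $ k) \<le> r}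
      \<le> emeasure lborel (cbox l u)"
    by (rule emeasure_mono) simp
  also have "\<dots> = ennreal (\<Prod>b\<in>Basis. 2 * g b)"
    using \<open>0 \<le> r\<close> by (simp add: emeasure_lborel_cbox_eq u_inner l_inner inner_diff_left g_def)
  also have "(\<Prod>b\<in>Basis. 2 * g b) = 2 ^ DIM(complex^'n) * r ^ 4"
  proof -
    have "F \<subseteq> Basis" "card F = 4"
      using \<open>j \<noteq> k\<close> by (simp_all add: F_def Basis_complex_def axis_eq_axis complex_eq_iff)
    then show ?thesis
      by (simp add: prod.distrib g_def prod.If_cases Int_absorb1)
  qed
  finally show ?thesis
    using \<open>0 \<le> r\<close> by (simp add: ennreal_leI order_trans)
qed

lemma cmod_components_le_norm_sq:
  fixes q :: "complex^'n"
  assumes "a \<noteq> j" "a \<noteq> k" "j \<noteq> k"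
  shows "(cmod (q $ j))\<^sup>2 + (cmod (q $ k))\<^sup>2 \<le> (norm q)\<^sup>2 - (cmod (q $ a))\<^sup>2"
proof -
  have "(norm q)\<^sup>2 = (cmod (q $ a))\<^sup>2 + (\<Sum>i\<in>UNIV - {a}. (cmod (q $ i))\<^sup>2)"
    by (simp add: norm_vec_def L2_set_def sum_nonneg sum.remove[of UNIV a])
  moreover have "(\<Sum>i\<in>{j, k}. (cmod (q $ i))\<^sup>2) \<le> (\<Sum>i\<in>UNIV - {a}. (cmod (q $ i))\<^sup>2)"
    by (rule sum_mono2) (use assms in auto)
  ultimately show ?thesis
    using assms by simp
qed

lemma avoid_dom_axis_transversal:
  fixes q :: "complex^'n"
  assumes q: "q \<in> avoid_dom (axis a 1)"
  shows "0 < (norm q)\<^sup>2 - (cmod (q $ a))\<^sup>2" "(norm q)\<^sup>2 - (cmod (q $ a))\<^sup>2 \<le> 1"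
proof -
  have "q \<noteq> 0" "norm q \<le> 1" "proj_perp q (axis a 1) \<noteq> 0"
    using q by (auto simp: avoid_dom_def)
  then have "0 < (norm (proj_perp q (axis a 1)))\<^sup>2" "(norm q)\<^sup>2 \<le> 1"
    by (simp_all add: power_le_one)
  with \<open>q \<noteq> 0\<close> show "0 < (norm q)\<^sup>2 - (cmod (q $ a))\<^sup>2"
    by (simp add: norm_proj_perp_sq herm_axis_left divide_less_eq)
  show "(norm q)\<^sup>2 - (cmod (q $ a))\<^sup>2 \<le> 1"
    using \<open>(norm q)\<^sup>2 \<le> 1\<close> zero_le_power2[of "cmod (q $ a)"] by linarith
qed

lemma fs_pullback_axis_le:
  fixes q :: "complex^'n"
  assumes q: "q \<in> avoid_dom (axis a 1)"
  shows "fs_pullback (axis a 1) w (\<i> *s w) q \<le> (norm w)\<^sup>2 / ((norm q)\<^sup>2 - (cmod (q $ a))\<^sup>2)"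
proof -
  have "q \<noteq> 0" "(norm q)\<^sup>2 \<le> 1"
    using q by (auto simp: avoid_dom_def power_le_one)
  have "fs_pullback (axis a 1) w (\<i> *s w) q \<le> (norm w)\<^sup>2 / (norm (proj_perp q (axis a 1)))\<^sup>2"
    by (rule fs_pullback_i_le)
  also have "\<dots> = (norm w)\<^sup>2 * (norm q)\<^sup>2 / ((norm q)\<^sup>2 - (cmod (q $ a))\<^sup>2)"
    using \<open>q \<noteq> 0\<close> by (simp add: norm_proj_perp_sq herm_axis_left field_simps)
  also have "\<dots> \<le> (norm w)\<^sup>2 / ((norm q)\<^sup>2 - (cmod (q $ a))\<^sup>2)"
    using \<open>(norm q)\<^sup>2 \<le> 1\<close> less_imp_le[OF avoid_dom_axis_transversal(1)[OF q]]
    by (intro divide_right_mono) (simp add: mult_left_le)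
  finally show ?thesis .
qed

lemma emeasure_avoid_dom_axis_level_le:
  fixes a j k :: "'n::finite"
  assumes "a \<noteq> j" "a \<noteq> k" "j \<noteq> k"
  shows "emeasure lborel {q \<in> avoid_dom (axis a 1 :: complex^'n). 4 ^ n \<le> 1 / ((norm q)\<^sup>2 - (cmod (q $ a))\<^sup>2)}
    \<le> ennreal (16 * 2 ^ DIM(complex^'n) * (1/16) ^ n)"
proof -
  have "{q \<in> avoid_dom (axis a 1). 4 ^ n \<le> 1 / ((norm q)\<^sup>2 - (cmod (q $ a))\<^sup>2)}
      \<subseteq> {q. norm q \<le> 1 \<and> cmod (q $ j) \<le> (1/2) ^ n \<and> cmod (q $ k) \<le> (1/2) ^ n}"
  proof
    fix q assume "q \<in> {q \<in> avoid_dom (axis a 1). 4 ^ n \<le> 1 / ((norm q)\<^sup>2 - (cmod (q $ a))\<^sup>2)}"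
    then have q: "q \<in> avoid_dom (axis a 1)" "4 ^ n \<le> 1 / ((norm q)\<^sup>2 - (cmod (q $ a))\<^sup>2)"
      by simp_all
    have "((1/2::real) ^ n)\<^sup>2 = 1 / 4 ^ n"
      by (simp add: power2_eq_square power_one_over flip: power_mult_distrib)
    moreover have "(norm q)\<^sup>2 - (cmod (q $ a))\<^sup>2 \<le> 1 / 4 ^ n"
      using q avoid_dom_axis_transversal(1)[OF q(1)] by (simp add: field_simps)
    ultimately have "(cmod (q $ j))\<^sup>2 \<le> ((1/2) ^ n)\<^sup>2" "(cmod (q $ k))\<^sup>2 \<le> ((1/2) ^ n)\<^sup>2"
      using cmod_components_le_norm_sq[OF assms, of q] zero_le_power2[of "cmod (q $ j)"]
        zero_le_power2[of "cmod (q $ k)"] by linarith+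
    then have "cmod (q $ j) \<le> (1/2) ^ n" "cmod (q $ k) \<le> (1/2) ^ n"
      by (simp_all only: power2_le_imp_le zero_le_power zero_le_divide_1_iff zero_le_numeral)
    moreover have "norm q \<le> 1"
      using q by (simp add: avoid_dom_def)
    ultimately show "q \<in> {q. norm q \<le> 1 \<and> cmod (q $ j) \<le> (1/2) ^ n \<and> cmod (q $ k) \<le> (1/2) ^ n}"
      by simp
  qed
  then have "emeasure lborel {q \<in> avoid_dom (axis a 1). 4 ^ n \<le> 1 / ((norm q)\<^sup>2 - (cmod (q $ a))\<^sup>2)}
      \<le> emeasure lborel {q::complex^'n. norm q \<le> 1 \<and> cmod (q $ j) \<le> (1/2) ^ n \<and> cmod (q $ k) \<le> (1/2) ^ n}"
    by (rule emeasure_mono) measurable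
  also have "\<dots> \<le> ennreal (16 * 2 ^ DIM(complex^'n) * (1/16) ^ n)"
  proof -
    have "((1/2::real) ^ n) ^ 4 = ((1/2) ^ 4) ^ n"
      by (simp only: power_mult[symmetric] mult.commute)
    then show ?thesis
      using emeasure_small_coordinates_le[OF \<open>j \<noteq> k\<close>, of "(1/2) ^ n"] by (simp add: power_divide)
  qed
  finally show ?thesis .
qed

lemma set_integrable_fs_pullback_axis:
  fixes a j k :: "'n::finite"
  assumes "a \<noteq> j" "a \<noteq> k" "j \<noteq> k"
  shows "set_integrable lborel (avoid_dom (axis a 1 :: complex^'n))
    (fs_pullback (axis a 1) (axis j 1) (\<i> *s axis j 1))"
proof -
  define S where "S = avoid_dom (axis a 1 :: complex^'n)"
  define P where "P = fs_pullback (axis a 1 :: complex^'n) (axis j 1) (\<i> *s axis j 1)"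
  define g where "g q = 1 / ((norm q)\<^sup>2 - (cmod (q $ a))\<^sup>2)" for q :: "complex^'n"
  have [measurable]: "S \<in> sets borel" "P \<in> borel_measurable borel" "g \<in> borel_measurable borel"
    unfolding S_def P_def g_def[abs_def] by measurable
  have "ennreal (norm (indicator S q *\<^sub>R P q)) \<le> indicator S q * ennreal (g q)" for q
    using fs_pullback_axis_le[of q a "axis j 1"] fs_pullback_i_nonneg[of "axis a 1" "axis j 1" q]
    by (cases "q \<in> S") (simp_all add: S_def P_def g_def ennreal_leI)
  then have "(\<integral>\<^sup>+q. ennreal (norm (indicator S q *\<^sub>R P q)) \<partial>lborel)
      \<le> (\<integral>\<^sup>+q. indicator S q * ennreal (g q) \<partial>lborel)"
    by (rule nn_integral_mono)
  also have "\<dots> < \<infinity>"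
  proof (rule nn_integral_finite_of_level_sets[where b = 4 and c = "1/16"])
    show "1 \<le> g q" if "q \<in> S" for q
      using avoid_dom_axis_transversal[of q a] that by (simp add: S_def g_def)
    show "emeasure lborel {q \<in> S. 4 ^ n \<le> g q} \<le> ennreal (16 * 2 ^ DIM(complex^'n) * (1/16) ^ n)" for n
      unfolding S_def g_def by (rule emeasure_avoid_dom_axis_level_le[OF assms])
  qed simp_all
  finally show ?thesis
    unfolding set_integrable_def S_def[symmetric] P_def[symmetric] by (rule integrableI_bounded[rotated]) simp
qed

lemma averaged_fs_form_axis_pos:
  fixes a j k :: "'n::finite"
  assumes "a \<noteq> j" "a \<noteq> k" "j \<noteq> k"
  shows "0 < averaged_fs_form (axis a 1 :: complex^'n) (axis j 1) (\<i> *s axis j 1)"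
proof -
  define e :: "complex^'n" where "e = axis a 1"
  define P where "P = fs_pullback e (axis j 1) (\<i> *s axis j 1)"
  define q0 :: "complex^'n" where "q0 = axis k (1/2)"
  have "herm e q0 = 0" "herm (axis j 1) q0 = 0"
    unfolding e_def q0_def herm_axis_left using assms by (simp_all add: axis_def)
  then have proj_q0: "proj_perp q0 e = e" "proj_perp q0 (axis j 1) = axis j 1"
    by (simp_all add: proj_perp_def)
  moreover have "proj_perp e (axis j 1) = axis j 1"
    unfolding e_def proj_perp_def herm_axis_right using assms by (simp add: axis_def)
  ultimately have "P q0 = 1"
    by (simp add: P_def fs_pullback_i e_def)
  moreover have "continuous (at q0) P"
    unfolding P_def using proj_q0 by (intro continuous_at_fs_pullback) (simp_all add: q0_def e_def)
  ultimately obtain d where d: "d > 0" "\<And>q. dist q q0 < d \<Longrightarrow> dist (P q) 1 < 1/2"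
    unfolding continuous_at_eps_delta by (metis half_gt_zero zero_less_one)
  show ?thesis
    unfolding averaged_fs_form_def e_def[symmetric] P_def[symmetric]
  proof (rule set_integral_pos_of_ball[where c = q0 and r = "min d (1/4)" and \<epsilon> = "1/2"])
    fix q assume "q \<in> ball q0 (min d (1/4))"
    then have "dist q q0 < d" "norm (q - q0) < 1/4"
      by (simp_all add: dist_commute dist_norm norm_minus_commute)
    then have "1/2 < P q"
      using d(2)[of q] unfolding dist_real_def by linarith
    moreover have "norm q \<le> 1" "q \<noteq> 0"
      using \<open>norm (q - q0) < 1/4\<close> norm_triangle_ineq[of q0 "q - q0"] norm_triangle_ineq[of q "q0 - q"]
      by (auto simp: q0_def norm_minus_commute)
    moreover have "proj_perp q e \<noteq> 0"
      using \<open>1/2 < P q\<close> by (auto simp: P_def fs_pullback_def fs_form_def)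
    ultimately show "q \<in> avoid_dom e \<and> 1/2 \<le> P q"
      by (simp add: avoid_dom_def)
  next
    show "set_integrable lborel (avoid_dom e) P"
      unfolding e_def P_def by (rule set_integrable_fs_pullback_axis[OF assms])
  qed (use d(1) in \<open>simp_all add: P_def fs_pullback_i_nonneg\<close>)
qed

theorem lemmaA2:
  assumes "CARD('m::finite) \<ge> 3"
  shows "\<exists>B::real. B > 0 \<and>
    (\<forall>(z::complex^'m) u v. z \<noteq> 0 \<longrightarrow>
       set_integrable lborel (avoid_dom z)
         (\<lambda>q. fs_form (proj_perp q z) (proj_perp q u) (proj_perp q v)) \<and>
       fs_form z u v = B * (LINT q : avoid_dom z | lborel.
          fs_form (proj_perp q z) (proj_perp q u) (proj_perp q v)))"
proof -
  obtain T :: "'m set" where "card T = 3"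
    using assms by (meson obtain_subset_with_card_n)
  then obtain a j k :: 'm where distinct: "a \<noteq> j" "a \<noteq> k" "j \<noteq> k"
    by (auto simp: card_3_iff)
  define e :: "complex^'m" where "e = axis a 1"
  define f :: "complex^'m" where "f = axis j 1"
  have ef: "orthonormal_pair e f"
    unfolding e_def f_def using distinct by (simp add: orthonormal_pair_axis)
  have integrable_ef: "set_integrable lborel (avoid_dom e) (fs_pullback e f (\<i> *s f))"
    unfolding e_def f_def by (rule set_integrable_fs_pullback_axis[OF distinct])
  have pos: "0 < averaged_fs_form e f (\<i> *s f)"
    unfolding e_def f_def by (rule averaged_fs_form_axis_pos[OF distinct])
  show ?thesis
  proof (intro exI[of _ "1 / averaged_fs_form e f (\<i> *s f)"] conjI allI impI)
    fix z u v :: "complex^'m"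
    assume "z \<noteq> 0"
    show "set_integrable lborel (avoid_dom z) (\<lambda>q. fs_form (proj_perp q z) (proj_perp q u) (proj_perp q v))"
      using set_integrable_fs_pullback[OF \<open>z \<noteq> 0\<close> ef integrable_ef]
      by (simp add: fs_pullback_def[abs_def])
    show "fs_form z u v = 1 / averaged_fs_form e f (\<i> *s f) * (LINT q : avoid_dom z | lborel.
        fs_form (proj_perp q z) (proj_perp q u) (proj_perp q v))"
      using averaged_fs_form_eq[OF \<open>z \<noteq> 0\<close> ef integrable_ef, of u v] pos
      by (simp add: averaged_fs_form_def fs_pullback_def)
  qed (use pos in simp)
qed

end
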